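(* Let $K\ge 2$, and let $\mathbb{P}^1_{\mathcal{X}},\dots,\mathbb{P}^K_{\mathcal{X}}$ be Borel probability measures on $\mathcal{X}=\mathbb{R}^\alpha$ with finite second moments. Let $\psi^m,\xi^m_\uparrow,\sigma,r^m,g^m$ ($m=1,\dots,M$) and the constants $C_{\sigma\circ g^m}$ be as follows: $\psi^m:\mathcal{X}\to\mathcal{Z}=\mathbb{R}^\gamma$ is $C_m$-Lipschitz, $\xi^m_\uparrow:\mathcal{Z}\to\mathcal{X}$ is $C_{m,\uparrow}$-Lipschitz, $\sigma:\mathcal{Z}\to\widetilde{\mathcal{Z}}\subseteq\mathcal{Z}$ is $C_\sigma$-Lipschitz, $r^m(x)=x-\xi^m_\uparrow(\psi^m(x))$, $g^m=\psi^m\circ (r^m)^{(L-1)}\circ (r^{m-1})^{(L)}\circ\cdots\circ (r^1)^{(L)}$ (with $g^1=\psi^1\circ(r^1)^{(L-1)}$), and $C_{\sigma\circ g^m}=C_\sigma C_m(1+C_mC_{m,\uparrow})^{L-1}\prod_{n=1}^{m-1}(1+C_nC_{n,\uparrow})^{L}$ (empty product equal to $1$). Set $C:=\sum_{m=1}^M\max\{(C_{\sigma\circ g^m})^2,1\}$. Then for every $\epsilon\ge 0$, $$\sum_{m=1}^M\max_{i\neq j}\widehat{\mathcal{W}}_{\epsilon,\widetilde{\mathcal{Z}}}\big((\sigma\circ g^m)_\#\mathbb{P}^i_{\mathcal{X}},(\sigma\circ g^m)_\#\mathbb{P}^j_{\mathcal{X}}\big)\le C\max_{i\neq j}\mathcal{W}_{\epsilon,\mathcal{X}}\big(\mathbb{P}^i_{\mathcal{X}},\mathbb{P}^j_{\mathcal{X}}\big),$$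 where the maxima range over $i,j\in\{1,\dots,K\}$ with $i\neq j$.
   Context: All spaces carry the Euclidean norm; $(r)^{(k)}$ is the $k$-fold composition ($(r)^{(0)}$ the identity); $f_\#\mu=\mu\circ f^{-1}$ denotes the pushforward measure. For a subset $S$ of a Euclidean space and Borel probability measures $\mu,\nu$ on $S$, let $\Pi(\mu,\nu;S)$ be the set of couplings of $\mu,\nu$, and for $\epsilon\ge0$ define the entropic regularized quadratic Wasserstein distance $$\mathcal{W}_{\epsilon,S}(\mu,\nu)=\inf_{\pi\in\Pi(\mu,\nu;S)}\int_{S\times S}\Big(\|x-y\|^2+\epsilon\log\frac{d\pi(x,y)}{d\mu(x)\,d\nu(y)}\Big)d\pi(x,y)$$ (the entropic term being $\epsilon\,\mathrm{KL}(\pi\,\|\,\mu\otimes\nu)$, taken as $+\infty$ if $\pi\not\ll\mu\otimes\nu$ and $\epsilon>0$). The Sinkhorn divergence is $\widehat{\mathcal{W}}_{\epsilon,S}(\mu,\nu)=\mathcal{W}_{\epsilon,S}(\mu,\nu)-\tfrac12\big(\mathcal{W}_{\epsilon,S}(\nu,\nu)+\mathcal{W}_{\epsilon,S}(\mu,\mu)\big)$. Here $S=\widetilde{\mathcal{Z}}$ or $S=\mathcal{X}$. *)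

theory Defs
  imports "HOL-Probability.Probability"
begin

text \<open>Borel probability measures on a Euclidean space are measures with
  sets M = sets borel and prob_space M.\<close>

definition couplings :: "'a::euclidean_space measure \<Rightarrow> 'a measure \<Rightarrow> ('a \<times> 'a) measure set" where
  "couplings \<mu> \<nu> = {\<pi>. prob_space \<pi> \<and> sets \<pi> = sets (borel \<Otimes>\<^sub>M borel) \<and>
        distr \<pi> borel fst = \<mu> \<and> distr \<pi> borel snd = \<nu>}"

definition KL_div :: "'b measure \<Rightarrow> 'b measure \<Rightarrow> ereal" where
  "KL_div \<pi> \<rho> =
     (if absolutely_continuous \<rho> \<pi> then
        (let f = (\<lambda>z. enn2real (RN_deriv \<rho> \<pi> z)) in
          enn2ereal (\<integral>\<^sup>+ z. ennreal (max 0 (ln (f z))) \<partial>\<pi>)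
          - enn2ereal (\<integral>\<^sup>+ z. ennreal (max 0 (- ln (f z))) \<partial>\<pi>))
      else \<infinity>)"

text \<open>Entropic regularised quadratic Wasserstein cost W_eps(mu,nu).  For eps = 0
  the entropy term vanishes (0 * infinity = 0 in ereal), giving W_2^2.\<close>

definition W_ent :: "real \<Rightarrow> 'a::euclidean_space measure \<Rightarrow> 'a measure \<Rightarrow> ereal" where
  "W_ent \<epsilon> \<mu> \<nu> =
     (INF \<pi> \<in> couplings \<mu> \<nu>.
        enn2ereal (\<integral>\<^sup>+ p. ennreal ((norm (fst p - snd p))\<^sup>2) \<partial>\<pi>)
        + ereal \<epsilon> * KL_div \<pi> (\<mu> \<Otimes>\<^sub>M \<nu>))"

definition sinkhorn :: "real \<Rightarrow> 'a::euclidean_space measure \<Rightarrow> 'a measure \<Rightarrow> ereal" where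
  "sinkhorn \<epsilon> \<mu> \<nu> = W_ent \<epsilon> \<mu> \<nu> - ereal (1/2) * (W_ent \<epsilon> \<nu> \<nu> + W_ent \<epsilon> \<mu> \<mu>)"

fun blocks :: "(nat \<Rightarrow> 'a \<Rightarrow> 'a) \<Rightarrow> nat \<Rightarrow> nat \<Rightarrow> 'a \<Rightarrow> 'a" where
  "blocks r L 0 = id"
| "blocks r L (Suc m) = (r (Suc m) ^^ L) \<circ> blocks r L m"

definition gmap :: "(nat \<Rightarrow> 'a \<Rightarrow> 'z) \<Rightarrow> (nat \<Rightarrow> 'a \<Rightarrow> 'a) \<Rightarrow> nat \<Rightarrow> nat \<Rightarrow> 'a \<Rightarrow> 'z" where
  "gmap \<psi> r L m = \<psi> m \<circ> (r m ^^ (L - 1)) \<circ> blocks r L (m - 1)"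

end

theory Submission
  imports Defs
begin

text \<open>Let \<open>F\<close> be \<open>C\<close>-Lipschitz.  Pushing a coupling \<open>\<pi>\<close> of \<open>\<mu>\<close> and \<open>\<nu>\<close> forward along
  \<open>F \<times> F\<close> gives a coupling of \<open>F\<^sub>#\<mu>\<close> and \<open>F\<^sub>#\<nu>\<close> whose quadratic cost is at most \<open>C\<^sup>2\<close>
  times that of \<open>\<pi>\<close> and whose relative entropy with respect to \<open>F\<^sub>#\<mu> \<otimes> F\<^sub>#\<nu>\<close> is at most
  \<open>KL(\<pi> | \<mu> \<otimes> \<nu>)\<close>, by the data processing inequality.  Hence the entropic cost contracts
  up to the factor \<open>max(C\<^sup>2, 1)\<close> under \<open>F\<close>, and the Sinkhorn divergence, which is at most the
  entropic cost because \<open>KL \<ge> 0\<close>, inherits the bound.  Every residual map \<open>x - \<xi>(\<psi>(x))\<close> is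
  \<open>(1 + C\<^sub>\<psi> C\<^sub>\<xi>)\<close>-Lipschitz, which yields the Lipschitz constant of \<open>\<sigma> \<circ> g\<^sup>m\<close>; summing the
  per-layer bounds over \<open>m\<close> gives the theorem.\<close>

section \<open>Relative entropy\<close>

definition ln_integral :: "'b measure \<Rightarrow> ('b \<Rightarrow> real) \<Rightarrow> ereal" where
  "ln_integral M f =
     enn2ereal (\<integral>\<^sup>+ z. ennreal (max 0 (ln (f z))) \<partial>M)
     - enn2ereal (\<integral>\<^sup>+ z. ennreal (max 0 (- ln (f z))) \<partial>M)"

lemma KL_div_eq_ln_integral:
  "absolutely_continuous \<rho> \<pi> \<Longrightarrow> KL_div \<pi> \<rho> = ln_integral \<pi> (\<lambda>z. enn2real (RN_deriv \<rho> \<pi> z))"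
  by (simp add: KL_div_def ln_integral_def Let_def)

lemma ln_integral_distr:
  assumes "T \<in> measurable M N" "h \<in> borel_measurable N"
  shows "ln_integral (distr M N T) h = ln_integral M (\<lambda>x. h (T x))"
  using assms by (simp add: ln_integral_def nn_integral_distr)

lemma neg_ln_le_inverse:
  fixes t :: real
  assumes "t > 0"
  shows "max 0 (- ln t) \<le> 1 / t"
proof -
  have "ln (1 / t) \<le> 1 / t - 1" using assms by (intro ln_le_minus_one) auto
  then show ?thesis using assms by (simp add: ln_div)
qed

lemma nn_integral_neg_ln_le_1:
  assumes "AE x in M. a x > 0" "(\<integral>\<^sup>+ x. ennreal (1 / a x) \<partial>M) \<le> 1"
  shows "(\<integral>\<^sup>+ x. ennreal (max 0 (- ln (a x))) \<partial>M) \<le> 1"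
proof -
  have "(\<integral>\<^sup>+ x. ennreal (max 0 (- ln (a x))) \<partial>M) \<le> (\<integral>\<^sup>+ x. ennreal (1 / a x) \<partial>M)"
    using assms(1) by (intro nn_integral_mono_AE) (auto elim!: eventually_mono intro!: ennreal_leI
      dest: neg_ln_le_inverse)
  then show ?thesis using assms(2) by simp
qed

lemma ln_parts_le:
  fixes a b :: real
  assumes "a > 0" "b > 0"
  shows "ennreal (max 0 (ln b)) + ennreal (max 0 (- ln a)) + 1
       \<le> ennreal (max 0 (ln a)) + ennreal (max 0 (- ln b)) + ennreal (b / a)"
proof -
  have "ln (b / a) \<le> b / a - 1" using assms by (intro ln_le_minus_one) auto
  then have "max 0 (ln b) + max 0 (- ln a) + 1 \<le> max 0 (ln a) + max 0 (- ln b) + b / a"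
    using assms by (simp add: ln_div)
  then have "ennreal (max 0 (ln b) + max 0 (- ln a) + 1) \<le> ennreal (max 0 (ln a) + max 0 (- ln b) + b / a)"
    by (rule ennreal_leI)
  then show ?thesis using assms by (simp add: ennreal_plus del: ennreal_plus_if)
qed

lemma ereal_diff_le_diff_swap:
  fixes x y s t :: ereal
  assumes "\<bar>s\<bar> \<noteq> \<infinity>" "\<bar>t\<bar> \<noteq> \<infinity>" "x + s \<le> y + t"
  shows "x - t \<le> y - s"
  using assms by (cases x; cases y; cases s; cases t) auto

text \<open>Integrate \<open>ln (b/a) \<le> b/a - 1\<close>, split into positive and negative parts of the
  logarithms; the bounds on \<open>\<integral> 1/a\<close> and \<open>\<integral> 1/b\<close> make both negative parts finite,
  which is what allows the resulting inequality to be rearranged in \<open>ereal\<close>.\<close>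

lemma ln_integral_le:
  assumes "prob_space M"
    and [measurable]: "a \<in> borel_measurable M" "b \<in> borel_measurable M"
    and a_pos: "AE x in M. a x > 0" and b_pos: "AE x in M. b x > 0"
    and ratio: "(\<integral>\<^sup>+ x. ennreal (b x / a x) \<partial>M) \<le> 1"
    and inv_a: "(\<integral>\<^sup>+ x. ennreal (1 / a x) \<partial>M) \<le> 1"
    and inv_b: "(\<integral>\<^sup>+ x. ennreal (1 / b x) \<partial>M) \<le> 1"
  shows "ln_integral M b \<le> ln_integral M a"
proof -
  interpret prob_space M by fact
  define pos where "pos f = (\<integral>\<^sup>+ z. ennreal (max 0 (ln (f z))) \<partial>M)" for f :: "_ \<Rightarrow> real"
  define neg where "neg f = (\<integral>\<^sup>+ z. ennreal (max 0 (- ln (f z))) \<partial>M)" for f :: "_ \<Rightarrow> real"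
  have "pos b + neg a + 1
      = (\<integral>\<^sup>+ x. ennreal (max 0 (ln (b x))) + ennreal (max 0 (- ln (a x))) + 1 \<partial>M)"
    by (simp add: pos_def neg_def nn_integral_add emeasure_space_1)
  also have "\<dots> \<le> (\<integral>\<^sup>+ x. ennreal (max 0 (ln (a x))) + ennreal (max 0 (- ln (b x)))
                       + ennreal (b x / a x) \<partial>M)"
  proof (rule nn_integral_mono_AE)
    show "AE x in M. ennreal (max 0 (ln (b x))) + ennreal (max 0 (- ln (a x))) + 1
        \<le> ennreal (max 0 (ln (a x))) + ennreal (max 0 (- ln (b x))) + ennreal (b x / a x)"
      using a_pos b_pos by eventually_elim (rule ln_parts_le)
  qed
  also have "\<dots> = pos a + neg b + (\<integral>\<^sup>+ x. ennreal (b x / a x) \<partial>M)"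
    by (simp add: pos_def neg_def nn_integral_add)
  also have "\<dots> \<le> pos a + neg b + 1"
    using ratio by (rule add_left_mono)
  finally have "1 + (pos b + neg a) \<le> 1 + (pos a + neg b)"
    by (simp only: ac_simps)
  then have "pos b + neg a \<le> pos a + neg b"
    by (simp add: ennreal_add_left_cancel_le)
  then have "enn2ereal (pos b) + enn2ereal (neg a) \<le> enn2ereal (pos a) + enn2ereal (neg b)"
    by (simp add: less_eq_ennreal.rep_eq plus_ennreal.rep_eq)
  moreover have "neg a \<noteq> top" "neg b \<noteq> top"
    using nn_integral_neg_ln_le_1[OF a_pos inv_a] nn_integral_neg_ln_le_1[OF b_pos inv_b]
    by (auto simp: neg_def top_unique)
  ultimately have "enn2ereal (pos b) - enn2ereal (neg b) \<le> enn2ereal (pos a) - enn2ereal (neg a)"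
    by (intro ereal_diff_le_diff_swap) simp_all
  then show ?thesis
    by (simp add: ln_integral_def pos_def neg_def)
qed

lemma nn_integral_RN_deriv_real:
  assumes "prob_space \<pi>" "prob_space \<rho>" "sets \<pi> = sets \<rho>" "absolutely_continuous \<rho> \<pi>"
    and "g \<in> borel_measurable \<rho>" "\<And>x. g x \<ge> 0"
  shows "(\<integral>\<^sup>+ x. ennreal (g x) \<partial>\<pi>) = (\<integral>\<^sup>+ x. ennreal (enn2real (RN_deriv \<rho> \<pi> x) * g x) \<partial>\<rho>)"
proof -
  interpret \<rho>: prob_space \<rho> by fact
  have "AE x in \<rho>. RN_deriv \<rho> \<pi> x \<noteq> \<infinity>"
    using assms by (intro \<rho>.RN_deriv_finite prob_space_imp_sigma_finite) auto
  then have "AE x in \<rho>. RN_deriv \<rho> \<pi> x * ennreal (g x) = ennreal (enn2real (RN_deriv \<rho> \<pi> x) * g x)"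
    by eventually_elim (simp add: assms(6) ennreal_mult' less_top)
  moreover have "(\<integral>\<^sup>+ x. ennreal (g x) \<partial>\<pi>) = (\<integral>\<^sup>+ x. RN_deriv \<rho> \<pi> x * ennreal (g x) \<partial>\<rho>)"
    using assms by (intro \<rho>.RN_deriv_nn_integral) auto
  ultimately show ?thesis
    by (simp add: nn_integral_cong_AE)
qed

lemma AE_RN_deriv_real_pos:
  assumes "prob_space \<pi>" "prob_space \<rho>" "sets \<pi> = sets \<rho>" "absolutely_continuous \<rho> \<pi>"
  shows "AE x in \<pi>. enn2real (RN_deriv \<rho> \<pi> x) > 0"
proof -
  define g where "g x = (if enn2real (RN_deriv \<rho> \<pi> x) \<le> 0 then 1 else 0 :: real)" for x
  have g_meas: "g \<in> borel_measurable \<rho>"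
    unfolding g_def by measurable
  have "enn2real (RN_deriv \<rho> \<pi> x) * g x = 0" for x
    unfolding g_def by (metis enn2real_nonneg mult_zero_left mult_zero_right order.antisym)
  then have "(\<lambda>x. ennreal (enn2real (RN_deriv \<rho> \<pi> x) * g x)) = (\<lambda>_. 0)"
    by (simp only: ennreal_0)
  moreover have "(\<integral>\<^sup>+ x. ennreal (g x) \<partial>\<pi>) = (\<integral>\<^sup>+ x. ennreal (enn2real (RN_deriv \<rho> \<pi> x) * g x) \<partial>\<rho>)"
    using assms g_meas by (intro nn_integral_RN_deriv_real) (auto simp: g_def)
  moreover have "(\<lambda>x. ennreal (g x)) \<in> borel_measurable \<pi>"
    using g_meas unfolding measurable_cong_sets[OF assms(3) refl] by measurable
  ultimately have "AE x in \<pi>. ennreal (g x) = 0"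
    by (simp add: nn_integral_0_iff_AE)
  then show ?thesis
    by eventually_elim (auto simp: g_def split: if_splits)
qed

lemma nn_integral_inverse_RN_deriv_real_le_1:
  assumes "prob_space \<pi>" "prob_space \<rho>" "sets \<pi> = sets \<rho>" "absolutely_continuous \<rho> \<pi>"
  shows "(\<integral>\<^sup>+ x. ennreal (1 / enn2real (RN_deriv \<rho> \<pi> x)) \<partial>\<pi>) \<le> 1"
proof -
  interpret \<rho>: prob_space \<rho> by fact
  have "(\<integral>\<^sup>+ x. ennreal (1 / enn2real (RN_deriv \<rho> \<pi> x)) \<partial>\<pi>)
      = (\<integral>\<^sup>+ x. ennreal (enn2real (RN_deriv \<rho> \<pi> x) * (1 / enn2real (RN_deriv \<rho> \<pi> x))) \<partial>\<rho>)"
    using assms by (intro nn_integral_RN_deriv_real) auto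
  also have "\<dots> \<le> (\<integral>\<^sup>+ x. 1 \<partial>\<rho>)"
    by (intro nn_integral_mono) (auto simp: ennreal_le_1)
  finally show ?thesis
    by (simp add: \<rho>.emeasure_space_1)
qed

lemma KL_div_nonneg:
  assumes "prob_space \<pi>" "prob_space \<rho>" "sets \<pi> = sets \<rho>"
  shows "KL_div \<pi> \<rho> \<ge> 0"
proof (cases "absolutely_continuous \<rho> \<pi>")
  case False
  then show ?thesis by (simp add: KL_div_def)
next
  case True
  interpret \<pi>: prob_space \<pi> by fact
  have inv: "(\<integral>\<^sup>+ x. ennreal (1 / enn2real (RN_deriv \<rho> \<pi> x)) \<partial>\<pi>) \<le> 1"
    using assms True by (rule nn_integral_inverse_RN_deriv_real_le_1)
  have "ln_integral \<pi> (\<lambda>_. 1) \<le> ln_integral \<pi> (\<lambda>z. enn2real (RN_deriv \<rho> \<pi> z))"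
  proof (rule ln_integral_le)
    show "(\<lambda>z. enn2real (RN_deriv \<rho> \<pi> z)) \<in> borel_measurable \<pi>"
      unfolding measurable_cong_sets[OF assms(3) refl] by measurable
    show "AE x in \<pi>. enn2real (RN_deriv \<rho> \<pi> x) > 0"
      using assms True by (rule AE_RN_deriv_real_pos)
  qed (simp_all add: assms(1) inv \<pi>.emeasure_space_1)
  then show ?thesis
    using True by (simp add: KL_div_eq_ln_integral ln_integral_def)
qed

lemma absolutely_continuous_distr:
  assumes ac: "absolutely_continuous \<rho> \<pi>" and sets: "sets \<pi> = sets \<rho>"
    and T: "T \<in> measurable \<rho> N"
  shows "absolutely_continuous (distr \<rho> N T) (distr \<pi> N T)"
  unfolding absolutely_continuous_def
proof
  fix A assume "A \<in> null_sets (distr \<rho> N T)"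
  then have A: "A \<in> sets N" and "T -` A \<inter> space \<rho> \<in> null_sets \<rho>"
    using T by (auto simp: null_sets_def emeasure_distr)
  then have "T -` A \<inter> space \<rho> \<in> null_sets \<pi>"
    using ac by (auto simp: absolutely_continuous_def)
  moreover have "T \<in> measurable \<pi> N"
    using T unfolding measurable_cong_sets[OF sets refl] .
  moreover have "space \<pi> = space \<rho>"
    using sets by (rule sets_eq_imp_space_eq)
  ultimately show "A \<in> null_sets (distr \<pi> N T)"
    using A by (simp add: null_sets_def emeasure_distr)
qed

lemma nn_integral_RN_deriv_distr_ratio_le_1:
  assumes \<pi>: "prob_space \<pi>" and \<rho>: "prob_space \<rho>" and sets: "sets \<pi> = sets \<rho>"
    and ac: "absolutely_continuous \<rho> \<pi>" and T: "T \<in> measurable \<rho> N"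
  defines "a z \<equiv> enn2real (RN_deriv \<rho> \<pi> z)"
    and "h y \<equiv> enn2real (RN_deriv (distr \<rho> N T) (distr \<pi> N T) y)"
  shows "(\<integral>\<^sup>+ x. ennreal (h (T x) / a x) \<partial>\<pi>) \<le> 1"
proof -
  have "T \<in> measurable \<pi> N"
    using T unfolding measurable_cong_sets[OF sets refl] .
  then have \<pi>': "prob_space (distr \<pi> N T)"
    by (rule prob_space.prob_space_distr[OF \<pi>])
  have \<rho>': "prob_space (distr \<rho> N T)"
    using T by (rule prob_space.prob_space_distr[OF \<rho>])
  have [measurable]: "h \<in> borel_measurable N"
    unfolding h_def by measurable
  have "(\<integral>\<^sup>+ x. ennreal (h (T x) / a x) \<partial>\<pi>) = (\<integral>\<^sup>+ x. ennreal (a x * (h (T x) / a x)) \<partial>\<rho>)"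
  proof (unfold a_def, rule nn_integral_RN_deriv_real)
    show "(\<lambda>x. h (T x) / enn2real (RN_deriv \<rho> \<pi> x)) \<in> borel_measurable \<rho>"
      using T by measurable
  qed (use assms in \<open>auto simp: h_def\<close>)
  also have "\<dots> \<le> (\<integral>\<^sup>+ x. ennreal (h (T x)) \<partial>\<rho>)"
    by (intro nn_integral_mono ennreal_leI) (auto simp: a_def h_def)
  also have "\<dots> = (\<integral>\<^sup>+ y. ennreal (h y * 1) \<partial>distr \<rho> N T)"
    using T by (simp add: nn_integral_distr)
  also have "\<dots> = (\<integral>\<^sup>+ y. ennreal 1 \<partial>distr \<pi> N T)"
    unfolding h_def using \<pi>' \<rho>' absolutely_continuous_distr[OF ac sets T]
    by (intro nn_integral_RN_deriv_real[symmetric]) auto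
  also have "\<dots> = 1"
    using prob_space.emeasure_space_1[OF \<pi>'] by simp
  finally show ?thesis .
qed

text \<open>Data processing: \<open>d\<pi>/d\<rho>\<close> is compared in \<open>ln_integral_le\<close> with the pulled-back density
  \<open>d(T\<^sub>#\<pi>)/d(T\<^sub>#\<rho>) \<circ> T\<close>.\<close>

lemma KL_div_distr_le:
  assumes "prob_space \<pi>" "prob_space \<rho>" "sets \<pi> = sets \<rho>" and T: "T \<in> measurable \<rho> N"
  shows "KL_div (distr \<pi> N T) (distr \<rho> N T) \<le> KL_div \<pi> \<rho>"
proof (cases "absolutely_continuous \<rho> \<pi>")
  case False
  then show ?thesis by (simp add: KL_div_def)
next
  case ac: True
  have T\<pi>: "T \<in> measurable \<pi> N"
    using T unfolding measurable_cong_sets[OF assms(3) refl] .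
  define \<pi>' where "\<pi>' = distr \<pi> N T"
  define \<rho>' where "\<rho>' = distr \<rho> N T"
  have \<pi>': "prob_space \<pi>'" and \<rho>': "prob_space \<rho>'" and sets': "sets \<pi>' = sets \<rho>'"
    and ac': "absolutely_continuous \<rho>' \<pi>'"
    using prob_space.prob_space_distr[OF assms(1) T\<pi>] prob_space.prob_space_distr[OF assms(2) T]
      absolutely_continuous_distr[OF ac assms(3) T]
    by (simp_all add: \<pi>'_def \<rho>'_def)
  define a where "a z = enn2real (RN_deriv \<rho> \<pi> z)" for z
  define h where "h y = enn2real (RN_deriv \<rho>' \<pi>' y)" for y
  have [measurable]: "h \<in> borel_measurable N"
    unfolding h_def \<rho>'_def by measurable
  have "ln_integral \<pi> (\<lambda>x. h (T x)) \<le> ln_integral \<pi> a"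
  proof (rule ln_integral_le)
    show "a \<in> borel_measurable \<pi>"
      unfolding a_def measurable_cong_sets[OF assms(3) refl] by measurable
    show "AE x in \<pi>. a x > 0"
      unfolding a_def using assms(1-3) ac by (rule AE_RN_deriv_real_pos)
    show "(\<integral>\<^sup>+ x. ennreal (1 / a x) \<partial>\<pi>) \<le> 1"
      unfolding a_def using assms(1-3) ac by (rule nn_integral_inverse_RN_deriv_real_le_1)
    have "AE y in \<pi>'. h y > 0"
      unfolding h_def using \<pi>' \<rho>' sets' ac' by (rule AE_RN_deriv_real_pos)
    then show "AE x in \<pi>. h (T x) > 0"
      unfolding \<pi>'_def using T\<pi> by (subst (asm) AE_distr_iff) auto
    have "(\<integral>\<^sup>+ x. ennreal (1 / h (T x)) \<partial>\<pi>) = (\<integral>\<^sup>+ y. ennreal (1 / h y) \<partial>\<pi>')"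
      using T\<pi> by (simp add: \<pi>'_def nn_integral_distr)
    also have "\<dots> \<le> 1"
      unfolding h_def by (rule nn_integral_inverse_RN_deriv_real_le_1[OF \<pi>' \<rho>' sets' ac'])
    finally show "(\<integral>\<^sup>+ x. ennreal (1 / h (T x)) \<partial>\<pi>) \<le> 1" .
    show "(\<integral>\<^sup>+ x. ennreal (h (T x) / a x) \<partial>\<pi>) \<le> 1"
      unfolding a_def h_def \<pi>'_def \<rho>'_def using assms(1-3) ac T by (rule nn_integral_RN_deriv_distr_ratio_le_1)
  qed (use assms(1) T\<pi> in simp_all)
  moreover have "KL_div \<pi>' \<rho>' = ln_integral \<pi>' h"
    using ac' unfolding h_def by (rule KL_div_eq_ln_integral)
  moreover have "ln_integral \<pi>' h = ln_integral \<pi> (\<lambda>x. h (T x))"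
    unfolding \<pi>'_def using T\<pi> by (rule ln_integral_distr) measurable
  moreover have "KL_div \<pi> \<rho> = ln_integral \<pi> a"
    using ac unfolding a_def by (rule KL_div_eq_ln_integral)
  ultimately show ?thesis
    unfolding \<pi>'_def \<rho>'_def by metis
qed

section \<open>Entropic transport cost under Lipschitz pushforward\<close>

definition entropic_cost ::
    "real \<Rightarrow> 'a::euclidean_space measure \<Rightarrow> 'a measure \<Rightarrow> ('a \<times> 'a) measure \<Rightarrow> ereal" where
  "entropic_cost \<epsilon> \<mu> \<nu> \<pi> =
     enn2ereal (\<integral>\<^sup>+ p. ennreal ((norm (fst p - snd p))\<^sup>2) \<partial>\<pi>) + ereal \<epsilon> * KL_div \<pi> (\<mu> \<Otimes>\<^sub>M \<nu>)"

lemma W_ent_eq_INF_entropic_cost: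
  "W_ent \<epsilon> \<mu> \<nu> = (INF \<pi> \<in> couplings \<mu> \<nu>. entropic_cost \<epsilon> \<mu> \<nu> \<pi>)"
  by (simp add: W_ent_def entropic_cost_def)

lemma couplingsD:
  assumes "\<pi> \<in> couplings \<mu> \<nu>"
  shows "prob_space \<pi>" "sets \<pi> = sets (borel \<Otimes>\<^sub>M borel)"
    and "distr \<pi> borel fst = \<mu>" "distr \<pi> borel snd = \<nu>"
    and "prob_space \<mu>" "prob_space \<nu>" "sets \<mu> = sets borel" "sets \<nu> = sets borel"
    and "sets \<pi> = sets (\<mu> \<Otimes>\<^sub>M \<nu>)" "prob_space (\<mu> \<Otimes>\<^sub>M \<nu>)"
proof -
  show \<pi>: "prob_space \<pi>" and sets: "sets \<pi> = sets (borel \<Otimes>\<^sub>M borel)"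
    and fst: "distr \<pi> borel fst = \<mu>" and snd: "distr \<pi> borel snd = \<nu>"
    using assms by (auto simp: couplings_def)
  have "fst \<in> measurable \<pi> borel" "snd \<in> measurable \<pi> borel"
    unfolding measurable_cong_sets[OF sets refl] by measurable
  then show \<mu>: "prob_space \<mu>" and \<nu>: "prob_space \<nu>"
    using prob_space.prob_space_distr[OF \<pi>] fst snd by blast+
  show sets_\<mu>: "sets \<mu> = sets borel" and sets_\<nu>: "sets \<nu> = sets borel"
    using fst snd by auto
  show "sets \<pi> = sets (\<mu> \<Otimes>\<^sub>M \<nu>)"
    using sets sets_\<mu> sets_\<nu> by (simp cong: sets_pair_measure_cong)
  interpret pair_prob_space \<mu> \<nu>
    using \<mu> \<nu> by (simp add: pair_prob_space_def pair_sigma_finite_def prob_space_imp_sigma_finite)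
  show "prob_space (\<mu> \<Otimes>\<^sub>M \<nu>)"
    by (rule P.prob_space_axioms)
qed

lemma entropic_cost_nonneg:
  assumes "\<pi> \<in> couplings \<mu> \<nu>" "\<epsilon> \<ge> 0"
  shows "entropic_cost \<epsilon> \<mu> \<nu> \<pi> \<ge> 0"
proof -
  have "KL_div \<pi> (\<mu> \<Otimes>\<^sub>M \<nu>) \<ge> 0"
    using couplingsD[OF assms(1)] by (intro KL_div_nonneg) auto
  then show ?thesis
    using assms(2) by (simp add: entropic_cost_def)
qed

lemma W_ent_nonneg: "\<epsilon> \<ge> 0 \<Longrightarrow> W_ent \<epsilon> \<mu> \<nu> \<ge> 0"
  unfolding W_ent_eq_INF_entropic_cost by (auto intro: INF_greatest entropic_cost_nonneg)

lemma sinkhorn_le_W_ent: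
  assumes "\<epsilon> \<ge> 0"
  shows "sinkhorn \<epsilon> \<mu> \<nu> \<le> W_ent \<epsilon> \<mu> \<nu>"
proof -
  have "ereal (1/2) * (W_ent \<epsilon> \<nu> \<nu> + W_ent \<epsilon> \<mu> \<mu>) \<ge> 0"
    using W_ent_nonneg[OF assms, of \<nu> \<nu>] W_ent_nonneg[OF assms, of \<mu> \<mu>] by simp
  moreover have "x - y \<le> x" if "y \<ge> 0" for x y :: ereal
    using that by (cases x; cases y) auto
  ultimately show ?thesis
    unfolding sinkhorn_def by blast
qed

lemma distr_map_prod_in_couplings:
  assumes F: "F \<in> borel_measurable borel" and \<pi>: "\<pi> \<in> couplings \<mu> \<nu>"
  shows "distr \<pi> (borel \<Otimes>\<^sub>M borel) (map_prod F F) \<in> couplings (distr \<mu> borel F) (distr \<nu> borel F)"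
proof -
  note c = couplingsD[OF \<pi>]
  note [measurable] = F
  have T: "map_prod F F \<in> measurable \<pi> (borel \<Otimes>\<^sub>M borel)"
    unfolding measurable_cong_sets[OF c(2) refl] map_prod_def by measurable
  have fst: "fst \<in> measurable \<pi> borel" and snd: "snd \<in> measurable \<pi> borel"
    unfolding measurable_cong_sets[OF c(2) refl] by measurable
  have "distr (distr \<pi> (borel \<Otimes>\<^sub>M borel) (map_prod F F)) borel fst = distr \<pi> borel (F \<circ> fst)"
    using T by (subst distr_distr) (auto simp: comp_def)
  also have "\<dots> = distr \<mu> borel F"
    using fst F c(3) by (subst distr_distr[symmetric]) auto
  moreover have "distr (distr \<pi> (borel \<Otimes>\<^sub>M borel) (map_prod F F)) borel snd = distr \<pi> borel (F \<circ> snd)"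
    using T by (subst distr_distr) (auto simp: comp_def)
  moreover have "\<dots> = distr \<nu> borel F"
    using snd F c(4) by (subst distr_distr[symmetric]) auto
  ultimately show ?thesis
    using prob_space.prob_space_distr[OF c(1) T] by (simp add: couplings_def)
qed

lemma nn_integral_quadratic_cost_distr_le:
  fixes F :: "'a::euclidean_space \<Rightarrow> 'b::euclidean_space"
  assumes F: "lipschitz_on c UNIV F" and sets: "sets \<pi> = sets (borel \<Otimes>\<^sub>M borel)"
  shows "(\<integral>\<^sup>+ p. ennreal ((norm (fst p - snd p))\<^sup>2) \<partial>distr \<pi> (borel \<Otimes>\<^sub>M borel) (map_prod F F))
       \<le> ennreal (c\<^sup>2) * (\<integral>\<^sup>+ p. ennreal ((norm (fst p - snd p))\<^sup>2) \<partial>\<pi>)"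
proof -
  have [measurable]: "F \<in> borel_measurable borel"
    using F by (intro borel_measurable_continuous_onI lipschitz_on_continuous_on)
  have T: "map_prod F F \<in> measurable \<pi> (borel \<Otimes>\<^sub>M borel)"
    unfolding measurable_cong_sets[OF sets refl] map_prod_def by measurable
  have "(norm (F x - F y))\<^sup>2 \<le> c\<^sup>2 * (norm (x - y))\<^sup>2" for x y
  proof -
    have "norm (F x - F y) \<le> c * norm (x - y)"
      using F by (rule lipschitz_on_normD) auto
    then show ?thesis
      by (metis norm_ge_zero power_mono power_mult_distrib)
  qed
  then have "(\<integral>\<^sup>+ p. ennreal ((norm (fst (map_prod F F p) - snd (map_prod F F p)))\<^sup>2) \<partial>\<pi>)
      \<le> (\<integral>\<^sup>+ p. ennreal (c\<^sup>2) * ennreal ((norm (fst p - snd p))\<^sup>2) \<partial>\<pi>)"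
    by (intro nn_integral_mono) (auto simp: ennreal_mult'[symmetric] intro: ennreal_leI)
  also have "\<dots> = ennreal (c\<^sup>2) * (\<integral>\<^sup>+ p. ennreal ((norm (fst p - snd p))\<^sup>2) \<partial>\<pi>)"
    by (rule nn_integral_cmult) (simp add: measurable_cong_sets[OF sets refl])
  finally show ?thesis
    using T by (simp add: nn_integral_distr)
qed

lemma KL_div_distr_map_prod_le:
  assumes F: "F \<in> borel_measurable borel" and \<pi>: "\<pi> \<in> couplings \<mu> \<nu>"
  shows "KL_div (distr \<pi> (borel \<Otimes>\<^sub>M borel) (map_prod F F)) (distr \<mu> borel F \<Otimes>\<^sub>M distr \<nu> borel F)
       \<le> KL_div \<pi> (\<mu> \<Otimes>\<^sub>M \<nu>)"
proof -
  note c = couplingsD[OF \<pi>]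
  have F\<mu>: "F \<in> measurable \<mu> borel" and F\<nu>: "F \<in> measurable \<nu> borel"
    using F c(7,8) by (simp_all cong: measurable_cong_sets)
  have "distr \<mu> borel F \<Otimes>\<^sub>M distr \<nu> borel F = distr (\<mu> \<Otimes>\<^sub>M \<nu>) (borel \<Otimes>\<^sub>M borel) (map_prod F F)"
    unfolding map_prod_def
    using F\<nu> by (intro pair_measure_distr[OF F\<mu> F\<nu>] prob_space_imp_sigma_finite
                        prob_space.prob_space_distr[OF c(6)])
  moreover have "map_prod F F \<in> measurable (\<mu> \<Otimes>\<^sub>M \<nu>) (borel \<Otimes>\<^sub>M borel)"
    unfolding map_prod_def using F\<mu> F\<nu> by measurable
  ultimately show ?thesis
    using KL_div_distr_le[OF c(1) c(10) c(9)] by simp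
qed

lemma entropic_cost_distr_le:
  fixes F :: "'a::euclidean_space \<Rightarrow> 'b::euclidean_space"
  assumes F: "lipschitz_on c UNIV F" and \<epsilon>: "\<epsilon> \<ge> 0" and \<pi>: "\<pi> \<in> couplings \<mu> \<nu>"
  shows "entropic_cost \<epsilon> (distr \<mu> borel F) (distr \<nu> borel F) (distr \<pi> (borel \<Otimes>\<^sub>M borel) (map_prod F F))
       \<le> ereal (max (c\<^sup>2) 1) * entropic_cost \<epsilon> \<mu> \<nu> \<pi>"
proof -
  note c = couplingsD[OF \<pi>]
  define k where "k = max (c\<^sup>2) 1"
  have "c\<^sup>2 \<le> k" "1 \<le> k"
    by (simp_all add: k_def)
  define A where "A = enn2ereal (\<integral>\<^sup>+ p. ennreal ((norm (fst p - snd p))\<^sup>2) \<partial>\<pi>)"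
  define B where "B = ereal \<epsilon> * KL_div \<pi> (\<mu> \<Otimes>\<^sub>M \<nu>)"
  have A: "A \<ge> 0" and B: "B \<ge> 0"
    using \<epsilon> KL_div_nonneg[OF c(1) c(10) c(9)] by (simp_all add: A_def B_def)
  have F_meas: "F \<in> borel_measurable borel"
    using F by (intro borel_measurable_continuous_onI lipschitz_on_continuous_on)
  have "enn2ereal (\<integral>\<^sup>+ p. ennreal ((norm (fst p - snd p))\<^sup>2) \<partial>distr \<pi> (borel \<Otimes>\<^sub>M borel) (map_prod F F))
      \<le> ereal (c\<^sup>2) * A"
    using nn_integral_quadratic_cost_distr_le[OF F c(2)]
    by (simp add: A_def less_eq_ennreal.rep_eq times_ennreal.rep_eq)
  also have "\<dots> \<le> ereal k * A"
    using A \<open>c\<^sup>2 \<le> k\<close> by (intro ereal_mult_right_mono) auto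
  moreover have "ereal \<epsilon> * KL_div (distr \<pi> (borel \<Otimes>\<^sub>M borel) (map_prod F F))
                                  (distr \<mu> borel F \<Otimes>\<^sub>M distr \<nu> borel F) \<le> B"
    unfolding B_def using KL_div_distr_map_prod_le[OF F_meas \<pi>] \<epsilon> by (intro ereal_mult_left_mono) auto
  moreover have "B \<le> ereal k * B"
  proof -
    have "1 * B \<le> ereal k * B"
      using B \<open>1 \<le> k\<close> by (intro ereal_mult_right_mono) auto
    then show ?thesis by simp
  qed
  ultimately have "entropic_cost \<epsilon> (distr \<mu> borel F) (distr \<nu> borel F) (distr \<pi> (borel \<Otimes>\<^sub>M borel) (map_prod F F))
      \<le> ereal k * A + ereal k * B"
    unfolding entropic_cost_def by (intro add_mono) auto
  also have "\<dots> = ereal k * entropic_cost \<epsilon> \<mu> \<nu> \<pi>"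
    using A B by (simp add: entropic_cost_def A_def B_def ereal_right_distrib)
  finally show ?thesis
    unfolding k_def .
qed

lemma ereal_mult_INF:
  fixes f :: "'i \<Rightarrow> ereal"
  assumes "k > 0"
  shows "ereal k * (INF i \<in> I. f i) = (INF i \<in> I. ereal k * f i)"
  using ereal_Inf_cmult[OF assms, of "\<lambda>x. x \<in> f ` I"]
  by (simp add: setcompr_eq_image image_image)

lemma W_ent_distr_le:
  fixes F :: "'a::euclidean_space \<Rightarrow> 'b::euclidean_space"
  assumes F: "lipschitz_on c UNIV F" and \<epsilon>: "\<epsilon> \<ge> 0"
  shows "W_ent \<epsilon> (distr \<mu> borel F) (distr \<nu> borel F) \<le> ereal (max (c\<^sup>2) 1) * W_ent \<epsilon> \<mu> \<nu>"
proof -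
  have F_meas: "F \<in> borel_measurable borel"
    using F by (intro borel_measurable_continuous_onI lipschitz_on_continuous_on)
  have "W_ent \<epsilon> (distr \<mu> borel F) (distr \<nu> borel F)
      \<le> (INF \<pi> \<in> couplings \<mu> \<nu>. ereal (max (c\<^sup>2) 1) * entropic_cost \<epsilon> \<mu> \<nu> \<pi>)"
    unfolding W_ent_eq_INF_entropic_cost
  proof (intro INF_greatest INF_lower2[OF distr_map_prod_in_couplings[OF F_meas]])
    fix \<pi> assume "\<pi> \<in> couplings \<mu> \<nu>"
    then show "entropic_cost \<epsilon> (distr \<mu> borel F) (distr \<nu> borel F) (distr \<pi> (borel \<Otimes>\<^sub>M borel) (map_prod F F))
         \<le> ereal (max (c\<^sup>2) 1) * entropic_cost \<epsilon> \<mu> \<nu> \<pi>"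
      by (rule entropic_cost_distr_le[OF F \<epsilon>])
  qed
  also have "\<dots> = ereal (max (c\<^sup>2) 1) * W_ent \<epsilon> \<mu> \<nu>"
    unfolding W_ent_eq_INF_entropic_cost by (rule ereal_mult_INF[symmetric]) simp
  finally show ?thesis .
qed

section \<open>Lipschitz constants of the layered maps\<close>

lemma lipschitz_on_funpow:
  fixes f :: "'a::metric_space \<Rightarrow> 'a"
  assumes "lipschitz_on c UNIV f"
  shows "lipschitz_on (c ^ n) UNIV (f ^^ n)"
proof (induction n)
  case 0
  show ?case by (simp add: lipschitz_on_def)
next
  case (Suc n)
  have "lipschitz_on (c * c ^ n) UNIV (f \<circ> (f ^^ n))"
    by (rule lipschitz_on_compose[OF Suc.IH]) (rule lipschitz_on_subset[OF assms], simp)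
  then show ?case by simp
qed

lemma lipschitz_on_residual:
  fixes \<psi> :: "'a::real_normed_vector \<Rightarrow> 'z::metric_space" and \<xi> :: "'z \<Rightarrow> 'a"
  assumes "lipschitz_on C\<psi> UNIV \<psi>" "lipschitz_on C\<xi> UNIV \<xi>"
  shows "lipschitz_on (1 + C\<psi> * C\<xi>) UNIV (\<lambda>x. x - \<xi> (\<psi> x))"
proof -
  have "lipschitz_on (C\<xi> * C\<psi>) UNIV (\<lambda>x. \<xi> (\<psi> x))"
    by (rule lipschitz_on_compose2[OF assms(1)]) (rule lipschitz_on_subset[OF assms(2)], simp)
  then show ?thesis
    using lipschitz_on_diff[OF lipschitz_on_id] by (simp add: mult.commute)
qed

lemma lipschitz_on_blocks:
  fixes r :: "nat \<Rightarrow> 'a::metric_space \<Rightarrow> 'a"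
  assumes "\<And>n. n \<in> {1..k} \<Longrightarrow> lipschitz_on (l n) UNIV (r n)"
  shows "lipschitz_on (\<Prod>n\<in>{1..k}. l n ^ L) UNIV (blocks r L k)"
  using assms
proof (induction k)
  case 0
  show ?case by (simp add: id_def lipschitz_on_id)
next
  case (Suc k)
  have "lipschitz_on (l (Suc k) ^ L * (\<Prod>n\<in>{1..k}. l n ^ L)) UNIV ((r (Suc k) ^^ L) \<circ> blocks r L k)"
    using Suc by (intro lipschitz_on_compose lipschitz_on_subset[OF lipschitz_on_funpow]) auto
  then show ?case
    by (simp add: prod.nat_ivl_Suc' mult.commute)
qed

lemma lipschitz_on_gmap:
  fixes r :: "nat \<Rightarrow> 'a::metric_space \<Rightarrow> 'a" and \<psi> :: "nat \<Rightarrow> 'a \<Rightarrow> 'z::metric_space"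
  assumes "m \<ge> 1" "\<And>n. n \<in> {1..m} \<Longrightarrow> lipschitz_on (l n) UNIV (r n)"
    and "lipschitz_on C UNIV (\<psi> m)"
  shows "lipschitz_on (C * l m ^ (L - 1) * (\<Prod>n\<in>{1..<m}. l n ^ L)) UNIV (gmap \<psi> r L m)"
proof -
  have "lipschitz_on (\<Prod>n\<in>{1..m - 1}. l n ^ L) UNIV (blocks r L (m - 1))"
    using assms(2) by (intro lipschitz_on_blocks) auto
  moreover have "{1..m - 1} = {1..<m}"
    using assms(1) by auto
  moreover have "lipschitz_on (C * l m ^ (L - 1)) UNIV (\<psi> m \<circ> (r m ^^ (L - 1)))"
    using assms by (intro lipschitz_on_compose lipschitz_on_funpow lipschitz_on_subset[OF assms(3)]) auto
  ultimately show ?thesis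
    unfolding gmap_def by (metis lipschitz_on_compose lipschitz_on_subset mult.commute subset_UNIV)
qed

lemma Max_offdiag_le_cmult:
  fixes f g :: "'i \<Rightarrow> 'i \<Rightarrow> ereal"
  assumes "finite I" "card I \<ge> 2" "k \<ge> 0"
    and "\<And>i j. i \<in> I \<Longrightarrow> j \<in> I \<Longrightarrow> i \<noteq> j \<Longrightarrow> f i j \<le> ereal k * g i j"
  shows "Max {f i j | i j. i \<in> I \<and> j \<in> I \<and> i \<noteq> j} \<le> ereal k * Max {g i j | i j. i \<in> I \<and> j \<in> I \<and> i \<noteq> j}"
proof -
  have fin: "finite {h i j | i j. i \<in> I \<and> j \<in> I \<and> i \<noteq> j}" for h :: "'i \<Rightarrow> 'i \<Rightarrow> ereal"
  proof (rule finite_subset)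
    show "{h i j | i j. i \<in> I \<and> j \<in> I \<and> i \<noteq> j} \<subseteq> case_prod h ` (I \<times> I)"
      by force
  qed (use assms(1) in simp)
  have "\<not> card I \<le> Suc 0"
    using assms(2) by simp
  then obtain i0 j0 where "i0 \<in> I" "j0 \<in> I" "i0 \<noteq> j0"
    using card_le_Suc0_iff_eq[OF assms(1)] by blast
  then have ne: "{h i j | i j. i \<in> I \<and> j \<in> I \<and> i \<noteq> j} \<noteq> {}" for h :: "'i \<Rightarrow> 'i \<Rightarrow> ereal"
    by (auto intro!: exI[of _ "h i0 j0"])
  show ?thesis
  proof (subst Max_le_iff[OF fin ne], safe)
    fix i j assume ij: "i \<in> I" "j \<in> I" "i \<noteq> j"
    have "f i j \<le> ereal k * g i j"
      using ij by (rule assms(4))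
    also have "\<dots> \<le> ereal k * Max {g i j | i j. i \<in> I \<and> j \<in> I \<and> i \<noteq> j}"
      using ij assms(3) by (intro ereal_mult_left_mono Max_ge[OF fin]) auto
    finally show "f i j \<le> ereal k * Max {g i j | i j. i \<in> I \<and> j \<in> I \<and> i \<noteq> j}" .
  qed
qed

lemma lipschitz_on_comp_gmap_residual:
  fixes \<psi> :: "nat \<Rightarrow> 'a::euclidean_space \<Rightarrow> 'z::metric_space" and \<xi> :: "nat \<Rightarrow> 'z \<Rightarrow> 'a"
    and \<sigma> :: "'z \<Rightarrow> 'y::metric_space"
  assumes m: "m \<ge> 1"
    and \<psi>: "\<And>n. n \<in> {1..m} \<Longrightarrow> lipschitz_on (C\<psi> n) UNIV (\<psi> n)"
    and \<xi>: "\<And>n. n \<in> {1..m} \<Longrightarrow> lipschitz_on (C\<xi> n) UNIV (\<xi> n)"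
    and \<sigma>: "lipschitz_on C\<sigma> UNIV \<sigma>"
    and r: "\<And>n x. r n x = x - \<xi> n (\<psi> n x)"
  shows "lipschitz_on (C\<sigma> * C\<psi> m * (1 + C\<psi> m * C\<xi> m) ^ (L - 1)
                        * (\<Prod>n\<in>{1..<m}. (1 + C\<psi> n * C\<xi> n) ^ L)) UNIV (\<sigma> \<circ> gmap \<psi> r L m)"
proof -
  have "lipschitz_on (1 + C\<psi> n * C\<xi> n) UNIV (r n)" if "n \<in> {1..m}" for n
    using lipschitz_on_residual[OF \<psi>[OF that] \<xi>[OF that]] by (simp add: r[abs_def])
  then have "lipschitz_on (C\<psi> m * (1 + C\<psi> m * C\<xi> m) ^ (L - 1) * (\<Prod>n\<in>{1..<m}. (1 + C\<psi> n * C\<xi> n) ^ L))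
               UNIV (gmap \<psi> r L m)"
    using m \<psi> by (intro lipschitz_on_gmap) auto
  then show ?thesis
    using lipschitz_on_compose[OF _ lipschitz_on_subset[OF \<sigma>]] by (simp add: mult.assoc)
qed

theorem theorem1:
  fixes K M L :: nat
    and P :: "nat \<Rightarrow> 'a::euclidean_space measure"
    and \<psi> :: "nat \<Rightarrow> 'a \<Rightarrow> 'z::euclidean_space"
    and \<xi> :: "nat \<Rightarrow> 'z \<Rightarrow> 'a"
    and \<sigma> :: "'z \<Rightarrow> 'z"
    and Zt :: "'z set"
    and Cpsi Cxi :: "nat \<Rightarrow> real"
    and Csig \<epsilon> :: real
    and r :: "nat \<Rightarrow> 'a \<Rightarrow> 'a"
  assumes K2: "K \<ge> 2"
    and L1: "L \<ge> 1"
    and P_prob: "\<And>i. i \<in> {1..K} \<Longrightarrow> prob_space (P i)"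
    and P_borel: "\<And>i. i \<in> {1..K} \<Longrightarrow> sets (P i) = sets borel"
    and P_mom: "\<And>i. i \<in> {1..K} \<Longrightarrow> integrable (P i) (\<lambda>x. (norm x)\<^sup>2)"
    and psi_lip: "\<And>m. m \<in> {1..M} \<Longrightarrow> lipschitz_on (Cpsi m) UNIV (\<psi> m)"
    and xi_lip: "\<And>m. m \<in> {1..M} \<Longrightarrow> lipschitz_on (Cxi m) UNIV (\<xi> m)"
    and sig_lip: "lipschitz_on Csig UNIV \<sigma>"
    and sig_range: "\<sigma> ` UNIV \<subseteq> Zt"
    and r_def: "\<And>m x. r m x = x - \<xi> m (\<psi> m x)"
    and eps: "\<epsilon> \<ge> 0"
  shows
    "(\<Sum>m\<in>{1..M}. Max {sinkhorn \<epsilon> (distr (P i) borel (\<sigma> \<circ> gmap \<psi> r L m))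
                                    (distr (P j) borel (\<sigma> \<circ> gmap \<psi> r L m))
                        | i j. i \<in> {1..K} \<and> j \<in> {1..K} \<and> i \<noteq> j})
     \<le> ereal (\<Sum>m\<in>{1..M}. max ((Csig * Cpsi m * (1 + Cpsi m * Cxi m) ^ (L - 1)
                              * (\<Prod>n\<in>{1..<m}. (1 + Cpsi n * Cxi n) ^ L))\<^sup>2) 1)
       * Max {W_ent \<epsilon> (P i) (P j) | i j. i \<in> {1..K} \<and> j \<in> {1..K} \<and> i \<noteq> j}"
proof -
  define c where "c m = Csig * Cpsi m * (1 + Cpsi m * Cxi m) ^ (L - 1)
                          * (\<Prod>n\<in>{1..<m}. (1 + Cpsi n * Cxi n) ^ L)" for m
  define W where "W = Max {W_ent \<epsilon> (P i) (P j) | i j. i \<in> {1..K} \<and> j \<in> {1..K} \<and> i \<noteq> j}"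
  have layer_lip: "lipschitz_on (c m) UNIV (\<sigma> \<circ> gmap \<psi> r L m)" if "m \<in> {1..M}" for m
    unfolding c_def using that
    by (intro lipschitz_on_comp_gmap_residual[where \<xi> = \<xi>] psi_lip xi_lip sig_lip r_def) auto
  have "Max {sinkhorn \<epsilon> (distr (P i) borel (\<sigma> \<circ> gmap \<psi> r L m)) (distr (P j) borel (\<sigma> \<circ> gmap \<psi> r L m))
                | i j. i \<in> {1..K} \<and> j \<in> {1..K} \<and> i \<noteq> j} \<le> ereal (max ((c m)\<^sup>2) 1) * W"
    if "m \<in> {1..M}" for m
    unfolding W_def using K2
    by (intro Max_offdiag_le_cmult order.trans[OF sinkhorn_le_W_ent W_ent_distr_le]
              layer_lip[OF that] eps) auto
  then have "(\<Sum>m\<in>{1..M}. Max {sinkhorn \<epsilon> (distr (P i) borel (\<sigma> \<circ> gmap \<psi> r L m))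
                                          (distr (P j) borel (\<sigma> \<circ> gmap \<psi> r L m))
                              | i j. i \<in> {1..K} \<and> j \<in> {1..K} \<and> i \<noteq> j})
      \<le> (\<Sum>m\<in>{1..M}. ereal (max ((c m)\<^sup>2) 1) * W)"
    by (rule sum_mono)
  also have "\<dots> = ereal (\<Sum>m\<in>{1..M}. max ((c m)\<^sup>2) 1) * W"
    by (subst sum_ereal[symmetric], subst sum_ereal_left_distrib) (auto simp: le_max_iff_disj)
  finally show ?thesis
    unfolding c_def W_def .
qed

end
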